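(* Let $q\equiv 3\pmod 4$ be a prime power and let $A$ be a multiplicative subgroup of $\mathbb{F}_q^*$ with $|A|\ge q^{2/3}$. There is an absolute constant $C>0$ such that for all functions $f_1,f_2,f_3,f_4\colon\mathbb{F}_q^2\to[-1,1]$, \[|N(f_1,f_2,f_3,f_4)|\le\min_{1\le j\le 4}\|f_j\|_{\square(V_1\times V_2)}+C\,\frac{q^{1/8}}{|A|^{1/4}}.\]
   Context: Define $\sigma\colon\mathbb{F}_q\to\mathbb{R}$ by $\sigma(x)=q/|A|$ if $x\in A$ and $\sigma(x)=0$ otherwise. Writing points of $\mathbb{F}_q^2=V_1\times V_2$ ($V_1=V_2=\mathbb{F}_q$) as $(a,c)$, define \[N(f_1,f_2,f_3,f_4)=\frac{1}{q^4}\sum_{a,b,c,d\in\mathbb{F}_q}f_1(a,c)f_2(a,d)f_3(b,c)f_4(b,d)\sigma(a-b)\sigma(c-d),\] \[M(f_1,f_2,f_3,f_4)=\frac{1}{q^4}\sum_{a,b,c,d\in\mathbb{F}_q}f_1(a,c)f_2(a,d)f_3(b,c)f_4(b,d),\] and $\|f\|_{\square(V_1\times V_2)}=M(f,f,f,f)^{1/4}$ for $f\colon\mathbb{F}_q^2\to[-1,1]$. *)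

theory Defs
  imports "HOL-Algebra.Multiplicative_Group"
begin

text \<open>Finite field F_q given as a HOL-Algebra field R whose elements are
  natural numbers (every finite field is isomorphic to one of this form), so that
  the absolute constant C can be quantified before the field.\<close>

definition sigma :: "nat ring \<Rightarrow> nat set \<Rightarrow> nat \<Rightarrow> real" where
  "sigma R A x = (if x \<in> A then real (card (carrier R)) / real (card A) else 0)"

definition Nform :: "nat ring \<Rightarrow> nat set \<Rightarrow> (nat \<times> nat \<Rightarrow> real) \<Rightarrow> (nat \<times> nat \<Rightarrow> real)
    \<Rightarrow> (nat \<times> nat \<Rightarrow> real) \<Rightarrow> (nat \<times> nat \<Rightarrow> real) \<Rightarrow> real" where
  "Nform R A f1 f2 f3 f4 = (1 / real (card (carrier R)) ^ 4) *
     (\<Sum>a\<in>carrier R. \<Sum>b\<in>carrier R. \<Sum>c\<in>carrier R. \<Sum>d\<in>carrier R.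
        f1 (a,c) * f2 (a,d) * f3 (b,c) * f4 (b,d) *
        sigma R A (a \<ominus>\<^bsub>R\<^esub> b) * sigma R A (c \<ominus>\<^bsub>R\<^esub> d))"

definition Mform :: "nat ring \<Rightarrow> (nat \<times> nat \<Rightarrow> real) \<Rightarrow> (nat \<times> nat \<Rightarrow> real)
    \<Rightarrow> (nat \<times> nat \<Rightarrow> real) \<Rightarrow> (nat \<times> nat \<Rightarrow> real) \<Rightarrow> real" where
  "Mform R f1 f2 f3 f4 = (1 / real (card (carrier R)) ^ 4) *
     (\<Sum>a\<in>carrier R. \<Sum>b\<in>carrier R. \<Sum>c\<in>carrier R. \<Sum>d\<in>carrier R.
        f1 (a,c) * f2 (a,d) * f3 (b,c) * f4 (b,d))"

definition box_norm :: "nat ring \<Rightarrow> (nat \<times> nat \<Rightarrow> real) \<Rightarrow> real" where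
  "box_norm R f = Mform R f f f f powr (1/4)"

end

theory Submission
  imports Defs "HOL-Analysis.Convex"
begin

text \<open>Write \<open>\<sigma>(a - b) \<sigma>(c - d) = 1 + (\<sigma>(a - b) - 1) + \<sigma>(a - b) (\<sigma>(c - d) - 1)\<close>.
  The constant term gives \<open>M\<close>, which the Gowers-Cauchy-Schwarz inequality bounds by the
  product, hence by the minimum, of the box norms. The other two terms are bilinear forms
  against the kernel \<open>\<sigma>(x - y) - 1\<close>, which annihilates constants. For mean-zero \<open>w\<close>,
  the sum \<open>\<Sum>_y (\<Sum>_{a \<in> A} w(y - a))^2\<close> is unchanged when \<open>A\<close> is dilated by any
  \<open>t \<in> A\<close>, and averaging the dilated sums over all \<open>t \<in> F_q\<close> kills the off-diagonal
  terms, so it is at most \<open>q \<Sum> w^2\<close>. Hence \<open>|N - M| \<le> 2 sqrt q / |A|\<close>, which is at most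
  \<open>2 q^(1/8) / |A|^(1/4)\<close> once \<open>|A| \<ge> sqrt q\<close>.\<close>

lemma sum_reindex_inj_endo:
  assumes "finite S" "inj_on f S" "f ` S \<subseteq> S"
  shows "(\<Sum>x\<in>S. g (f x)) = (\<Sum>x\<in>S. g x)"
  using sum.reindex[OF assms(2), of g] endo_inj_surj[OF assms(1,3,2)] by simp

lemma sum_double_swap:
  "(\<Sum>x\<in>X. \<Sum>y\<in>Y. \<Sum>u\<in>U. \<Sum>v\<in>V. G x y u v) = (\<Sum>u\<in>U. \<Sum>v\<in>V. \<Sum>x\<in>X. \<Sum>y\<in>Y. G x y u v)"
  by (subst (2) sum.swap, subst sum.swap) (simp only: sum.swap[where A = Y])

lemma abs_double_sum_le:
  fixes G :: "'a \<Rightarrow> 'a \<Rightarrow> real"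
  assumes "\<And>x y. x \<in> F \<Longrightarrow> y \<in> F \<Longrightarrow> \<bar>G x y\<bar> \<le> B"
  shows "\<bar>\<Sum>x\<in>F. \<Sum>y\<in>F. G x y\<bar> \<le> real (card F)^2 * B"
proof -
  have "\<bar>\<Sum>x\<in>F. \<Sum>y\<in>F. G x y\<bar> \<le> (\<Sum>x\<in>F. \<Sum>y\<in>F. \<bar>G x y\<bar>)"
    by (rule order_trans[OF sum_abs sum_mono[OF sum_abs]])
  also have "\<dots> \<le> (\<Sum>x\<in>F. \<Sum>y\<in>F. B)"
    using assms by (intro sum_mono) auto
  finally show ?thesis by (simp add: power2_eq_square)
qed

lemma Cauchy_Schwarz_ineq_double_sum:
  fixes P Q :: "'a \<Rightarrow> 'a \<Rightarrow> real"
  shows "(\<Sum>x\<in>F. \<Sum>y\<in>F. P x y * Q x y)\<^sup>2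
    \<le> (\<Sum>x\<in>F. \<Sum>y\<in>F. (P x y)\<^sup>2) * (\<Sum>x\<in>F. \<Sum>y\<in>F. (Q x y)\<^sup>2)"
  using Cauchy_Schwarz_ineq_sum[of "\<lambda>z. P (fst z) (snd z)" "\<lambda>z. Q (fst z) (snd z)" "F \<times> F"]
  by (simp add: sum.cartesian_product case_prod_beta)

lemma sum_sq_sub_mean_le:
  fixes v :: "'a \<Rightarrow> real"
  shows "(\<Sum>y\<in>S. (v y - (\<Sum>z\<in>S. v z) / card S)\<^sup>2) \<le> (\<Sum>y\<in>S. (v y)\<^sup>2)"
proof -
  define m where "m = (\<Sum>z\<in>S. v z) / card S"
  have sum_v: "(\<Sum>z\<in>S. v z) = card S * m"
    by (cases "card S = 0") (auto simp: m_def card_eq_0_iff)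
  have "(\<Sum>y\<in>S. (v y - m)\<^sup>2) = (\<Sum>y\<in>S. (v y)\<^sup>2) - 2 * m * (\<Sum>z\<in>S. v z) + card S * m\<^sup>2"
    by (simp add: power2_diff sum.distrib sum_subtractf sum_distrib_left sum_distrib_right mult_ac)
  also have "\<dots> = (\<Sum>y\<in>S. (v y)\<^sup>2) - card S * m\<^sup>2"
    by (simp add: sum_v power2_eq_square)
  finally show ?thesis by (simp add: m_def)
qed

lemma power4_le_imp_le_powr:
  fixes x y :: real
  assumes "0 \<le> x" "x ^ 4 \<le> y"
  shows "x \<le> y powr (1/4)"
proof -
  have "x = root 4 (x ^ 4)" using assms(1) by (simp add: real_root_power_cancel)
  also have "\<dots> \<le> root 4 y" using assms(2) by simp
  also have "\<dots> = y powr (1/4)"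
    using assms order_trans[OF zero_le_power[OF assms(1)] assms(2)] by (simp add: root_powr_inverse)
  finally show ?thesis .
qed

lemma (in abelian_group) minus_minus_cancel_left:
  "x \<in> carrier G \<Longrightarrow> y \<in> carrier G \<Longrightarrow> x \<ominus> (x \<ominus> y) = y"
  by (simp add: minus_eq minus_add a_assoc[symmetric] r_neg)

context ring
begin

lemma sum_carrier_reflect:
  assumes "finite (carrier R)" "x \<in> carrier R"
  shows "(\<Sum>y\<in>carrier R. g (x \<ominus> y)) = (\<Sum>y\<in>carrier R. g y)"
proof (rule sum_reindex_inj_endo[OF assms(1)])
  show "inj_on (\<lambda>y. x \<ominus> y) (carrier R)"
    using assms(2) by (metis inj_onI minus_minus_cancel_left)
  show "(\<lambda>y. x \<ominus> y) ` carrier R \<subseteq> carrier R" using assms(2) by auto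
qed

lemma sum_carrier_translate:
  assumes "finite (carrier R)" "b \<in> carrier R"
  shows "(\<Sum>y\<in>carrier R. g (y \<oplus> b)) = (\<Sum>y\<in>carrier R. g y)"
  using assms by (intro sum_reindex_inj_endo) (auto intro: inj_onI)

end

context domain
begin

lemma sum_carrier_affine:
  assumes "finite (carrier R)" "b \<in> carrier R" "c \<in> carrier R - {\<zero>}"
  shows "(\<Sum>t\<in>carrier R. g (b \<oplus> c \<otimes> t)) = (\<Sum>t\<in>carrier R. g t)"
proof (rule sum_reindex_inj_endo[OF assms(1)])
  show "inj_on (\<lambda>t. b \<oplus> c \<otimes> t) (carrier R)"
    using assms(2,3) m_lcancel by (auto intro!: inj_onI)
  show "(\<lambda>t. b \<oplus> c \<otimes> t) ` carrier R \<subseteq> carrier R" using assms(2,3) by auto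
qed

lemma sum_subgroup_dilate:
  assumes "finite (carrier R)" "subgroup A (mult_of R)" "t \<in> A"
  shows "(\<Sum>a\<in>A. g (t \<otimes> a)) = (\<Sum>a\<in>A. g a)"
proof -
  have A: "A \<subseteq> carrier R - {\<zero>}"
    using subgroup.subset[OF assms(2)] by simp
  show ?thesis
  proof (rule sum_reindex_inj_endo)
    show "finite A" using A assms(1) finite_subset by blast
    show "inj_on ((\<otimes>) t) A"
    proof (rule inj_onI)
      fix x y assume "x \<in> A" "y \<in> A" "t \<otimes> x = t \<otimes> y"
      then show "x = y" using A assms(3) m_lcancel[of t x y] by blast
    qed
    show "(\<otimes>) t ` A \<subseteq> A"
      using subgroup.m_closed[OF assms(2) assms(3)] by auto
  qed
qed

text \<open>After the substitution \<open>y \<mapsto> y \<oplus> t \<otimes> a\<close> the inner sum becomes a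
  correlation of \<open>w\<close> with its translate by \<open>(a \<ominus> a') \<otimes> t\<close>; for \<open>a \<noteq> a'\<close>
  summing over all \<open>t\<close> sweeps this translate over the whole field.\<close>
lemma sum_dilate_correlation:
  assumes fin: "finite (carrier R)" and a: "a \<in> carrier R" "a' \<in> carrier R"
    and mean_zero: "(\<Sum>x\<in>carrier R. w x) = 0"
  shows "(\<Sum>t\<in>carrier R. \<Sum>y\<in>carrier R. w (y \<ominus> t \<otimes> a) * w (y \<ominus> t \<otimes> a'))
    = (if a = a' then real (card (carrier R)) * (\<Sum>y\<in>carrier R. (w y)\<^sup>2) else 0)"
proof -
  have translate: "(\<Sum>y\<in>carrier R. w (y \<ominus> t \<otimes> a) * w (y \<ominus> t \<otimes> a'))
      = (\<Sum>y\<in>carrier R. w y * w (y \<oplus> (a \<ominus> a') \<otimes> t))" if t: "t \<in> carrier R" for t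
  proof -
    have "(\<Sum>y\<in>carrier R. w (y \<ominus> t \<otimes> a) * w (y \<ominus> t \<otimes> a'))
        = (\<Sum>y\<in>carrier R. w ((y \<oplus> t \<otimes> a) \<ominus> t \<otimes> a) * w ((y \<oplus> t \<otimes> a) \<ominus> t \<otimes> a'))"
      using sum_carrier_translate[OF fin, of "t \<otimes> a" "\<lambda>z. w (z \<ominus> t \<otimes> a) * w (z \<ominus> t \<otimes> a')"] t a
      by simp
    also have "\<dots> = (\<Sum>y\<in>carrier R. w y * w (y \<oplus> (a \<ominus> a') \<otimes> t))"
    proof (rule sum.cong[OF refl])
      fix y assume y: "y \<in> carrier R"
      have "(y \<oplus> t \<otimes> a) \<ominus> t \<otimes> a = y" "(y \<oplus> t \<otimes> a) \<ominus> t \<otimes> a' = y \<oplus> (a \<ominus> a') \<otimes> t"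
        using y t a by algebra+
      then show "w ((y \<oplus> t \<otimes> a) \<ominus> t \<otimes> a) * w ((y \<oplus> t \<otimes> a) \<ominus> t \<otimes> a') = w y * w (y \<oplus> (a \<ominus> a') \<otimes> t)"
        by simp
    qed
    finally show ?thesis .
  qed
  show ?thesis
  proof (cases "a = a'")
    case True
    have "y \<oplus> (a \<ominus> a') \<otimes> t = y" if "y \<in> carrier R" "t \<in> carrier R" for y t
      using that a True by algebra
    then show ?thesis
      using translate True by (simp add: power2_eq_square)
  next
    case False
    have "(\<Sum>t\<in>carrier R. w (y \<oplus> (a \<ominus> a') \<otimes> t)) = 0" if "y \<in> carrier R" for y
      using sum_carrier_affine[OF fin that, of "a \<ominus> a'" w] a False mean_zero
      by (simp add: r_right_minus_eq)
    then have "(\<Sum>t\<in>carrier R. \<Sum>y\<in>carrier R. w y * w (y \<oplus> (a \<ominus> a') \<otimes> t)) = 0"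
      by (subst sum.swap) (simp add: flip: sum_distrib_left)
    then show ?thesis
      using translate False by simp
  qed
qed

lemma sum_dilate_convolution_sq:
  assumes fin: "finite (carrier R)" and A: "A \<subseteq> carrier R"
    and mean_zero: "(\<Sum>x\<in>carrier R. w x) = 0"
  shows "(\<Sum>t\<in>carrier R. \<Sum>y\<in>carrier R. (\<Sum>a\<in>A. w (y \<ominus> t \<otimes> a))\<^sup>2)
    = real (card A) * real (card (carrier R)) * (\<Sum>y\<in>carrier R. (w y)\<^sup>2)"
proof -
  have "finite A" using A fin finite_subset by blast
  have "(\<Sum>t\<in>carrier R. \<Sum>y\<in>carrier R. (\<Sum>a\<in>A. w (y \<ominus> t \<otimes> a))\<^sup>2)
      = (\<Sum>t\<in>carrier R. \<Sum>y\<in>carrier R. \<Sum>a\<in>A. \<Sum>a'\<in>A. w (y \<ominus> t \<otimes> a) * w (y \<ominus> t \<otimes> a'))"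
    by (simp add: power2_eq_square sum_product)
  also have "\<dots> = (\<Sum>a\<in>A. \<Sum>a'\<in>A. \<Sum>t\<in>carrier R. \<Sum>y\<in>carrier R. w (y \<ominus> t \<otimes> a) * w (y \<ominus> t \<otimes> a'))"
    by (rule sum_double_swap)
  also have "\<dots> = (\<Sum>a\<in>A. \<Sum>a'\<in>A. if a = a' then real (card (carrier R)) * (\<Sum>y\<in>carrier R. (w y)\<^sup>2) else 0)"
    using A by (intro sum.cong refl) (simp add: subsetD sum_dilate_correlation[OF fin _ _ mean_zero])
  finally show ?thesis
    using \<open>finite A\<close> by simp
qed

text \<open>Since \<open>t A = A\<close> for \<open>t \<in> A\<close>, the left-hand side is the average over \<open>t \<in> A\<close> of the
  nonnegative sums of \<open>sum_dilate_convolution_sq\<close>.\<close>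
lemma sum_subgroup_convolution_sq_le:
  assumes fin: "finite (carrier R)" and sg: "subgroup A (mult_of R)"
    and mean_zero: "(\<Sum>x\<in>carrier R. w x) = 0"
  shows "(\<Sum>y\<in>carrier R. (\<Sum>a\<in>A. w (y \<ominus> a))\<^sup>2)
    \<le> real (card (carrier R)) * (\<Sum>y\<in>carrier R. (w y)\<^sup>2)"
proof -
  define Q where "Q t = (\<Sum>y\<in>carrier R. (\<Sum>a\<in>A. w (y \<ominus> t \<otimes> a))\<^sup>2)" for t
  have A: "A \<subseteq> carrier R" "\<one> \<in> A"
    using subgroup.subset[OF sg] subgroup.one_closed[OF sg] by auto
  then have "finite A" "card A > 0"
    using fin finite_subset card_gt_0_iff by blast+
  have "Q t = (\<Sum>y\<in>carrier R. (\<Sum>a\<in>A. w (y \<ominus> a))\<^sup>2)" if "t \<in> A" for t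
    unfolding Q_def using sum_subgroup_dilate[OF fin sg that, of "\<lambda>a. w (_ \<ominus> a)"] by simp
  then have "real (card A) * (\<Sum>y\<in>carrier R. (\<Sum>a\<in>A. w (y \<ominus> a))\<^sup>2) = (\<Sum>t\<in>A. Q t)"
    by simp
  also have "\<dots> \<le> (\<Sum>t\<in>carrier R. Q t)"
    using A fin by (intro sum_mono2) (auto simp: Q_def intro: sum_nonneg)
  also have "\<dots> = real (card A) * (real (card (carrier R)) * (\<Sum>y\<in>carrier R. (w y)\<^sup>2))"
    unfolding Q_def using sum_dilate_convolution_sq[OF fin A(1) mean_zero] by simp
  finally show ?thesis
    using \<open>card A > 0\<close> by simp
qed

end

lemma sigma_nonneg: "sigma R A x \<ge> 0"
  by (simp add: sigma_def)

lemma sum_sigma_mult: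
  fixes R :: "nat ring" (structure)
  assumes "ring R" and fin: "finite (carrier R)" and A: "A \<subseteq> carrier R" and x: "x \<in> carrier R"
  shows "(\<Sum>y\<in>carrier R. sigma R A (x \<ominus> y) * v y)
    = real (card (carrier R)) / real (card A) * (\<Sum>a\<in>A. v (x \<ominus> a))"
proof -
  interpret ring R by fact
  have "(\<Sum>y\<in>carrier R. sigma R A (x \<ominus> y) * v y)
      = (\<Sum>y\<in>carrier R. sigma R A (x \<ominus> y) * v (x \<ominus> (x \<ominus> y)))"
    using x by (intro sum.cong refl) (simp add: minus_minus_cancel_left)
  also have "\<dots> = (\<Sum>z\<in>carrier R. sigma R A z * v (x \<ominus> z))"
    by (rule sum_carrier_reflect[OF fin x])
  also have "\<dots> = (\<Sum>z\<in>carrier R. if z \<in> A then real (card (carrier R)) / real (card A) * v (x \<ominus> z) else 0)"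
    by (intro sum.cong refl) (simp add: sigma_def)
  also have "\<dots> = (\<Sum>z\<in>A. real (card (carrier R)) / real (card A) * v (x \<ominus> z))"
    using A by (simp add: sum.inter_restrict[symmetric, OF fin] Int_absorb1)
  finally show ?thesis by (simp add: sum_distrib_left)
qed

lemma sum_sigma:
  fixes R :: "nat ring" (structure)
  assumes "ring R" and fin: "finite (carrier R)" and A: "A \<subseteq> carrier R" "A \<noteq> {}"
    and x: "x \<in> carrier R"
  shows "(\<Sum>y\<in>carrier R. sigma R A (x \<ominus> y)) = real (card (carrier R))"
proof -
  have "card A > 0" using A fin finite_subset card_gt_0_iff by blast
  then show ?thesis using sum_sigma_mult[OF assms(1) fin A(1) x, of "\<lambda>_. 1"] by simp
qed

text \<open>The kernel ignores the mean of \<open>v\<close>, and on mean-zero functions convolution with \<open>\<sigma>\<close>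
  has operator norm at most \<open>q^(3/2) / |A|\<close>.\<close>
lemma sigma_bilinear_bound:
  fixes R :: "nat ring" (structure) and u v :: "nat \<Rightarrow> real"
  assumes "domain R" and fin: "finite (carrier R)" and sg: "subgroup A (mult_of R)"
    and u: "\<And>x. x \<in> carrier R \<Longrightarrow> \<bar>u x\<bar> \<le> 1" and v: "\<And>y. y \<in> carrier R \<Longrightarrow> \<bar>v y\<bar> \<le> 1"
  shows "\<bar>\<Sum>x\<in>carrier R. \<Sum>y\<in>carrier R. (sigma R A (x \<ominus> y) - 1) * (u x * v y)\<bar>
    \<le> real (card (carrier R))^2 * (sqrt (real (card (carrier R))) / real (card A))"
proof -
  interpret domain R by fact
  define q where "q = real (card (carrier R))"
  define n where "n = real (card A)"
  have A: "A \<subseteq> carrier R" "\<one> \<in> A"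
    using subgroup.subset[OF sg] subgroup.one_closed[OF sg] by auto
  then have "q > 0" "n > 0"
    using fin finite_subset card_gt_0_iff unfolding q_def n_def by (metis of_nat_0_less_iff empty_iff subsetD)+
  define w where "w y = v y - (\<Sum>z\<in>carrier R. v z) / q" for y
  define h where "h x = (\<Sum>y\<in>carrier R. (sigma R A (x \<ominus> y) - 1) * v y)" for x
  have w_mean_zero: "(\<Sum>y\<in>carrier R. w y) = 0"
    using \<open>q > 0\<close> by (simp add: w_def sum_subtractf q_def)
  have h_eq: "h x = q / n * (\<Sum>a\<in>A. w (x \<ominus> a))" if "x \<in> carrier R" for x
  proof -
    have "h x = q / n * (\<Sum>a\<in>A. v (x \<ominus> a)) - (\<Sum>z\<in>carrier R. v z)"
      using sum_sigma_mult[OF ring_axioms fin A(1) that, of v]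
      by (simp add: h_def q_def n_def left_diff_distrib sum_subtractf)
    moreover have "(\<Sum>a\<in>A. w (x \<ominus> a)) = (\<Sum>a\<in>A. v (x \<ominus> a)) - n * ((\<Sum>z\<in>carrier R. v z) / q)"
      by (simp add: w_def sum_subtractf n_def)
    ultimately show ?thesis
      using \<open>q > 0\<close> \<open>n > 0\<close> by (simp add: field_simps)
  qed
  have sum_sq_le: "(\<Sum>x\<in>carrier R. (f x)\<^sup>2) \<le> q" if "\<And>x. x \<in> carrier R \<Longrightarrow> \<bar>f x\<bar> \<le> 1" for f
    using sum_bounded_above[of "carrier R" "\<lambda>x. (f x)\<^sup>2" 1] that
    by (simp add: q_def abs_square_le_1)
  have "(\<Sum>x\<in>carrier R. (h x)\<^sup>2) = (q / n)\<^sup>2 * (\<Sum>x\<in>carrier R. (\<Sum>a\<in>A. w (x \<ominus> a))\<^sup>2)"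
    unfolding sum_distrib_left by (intro sum.cong refl) (simp only: h_eq power_mult_distrib)
  also have "\<dots> \<le> (q / n)\<^sup>2 * (q * (\<Sum>y\<in>carrier R. (w y)\<^sup>2))"
    using sum_subgroup_convolution_sq_le[OF fin sg w_mean_zero]
    by (intro mult_left_mono) (simp_all add: q_def)
  also have "\<dots> \<le> (q / n)\<^sup>2 * (q * q)"
    using order_trans[OF sum_sq_sub_mean_le sum_sq_le[of v, OF v]] \<open>q > 0\<close>
    by (intro mult_left_mono) (auto simp: w_def q_def)
  finally have h_sq: "(\<Sum>x\<in>carrier R. (h x)\<^sup>2) \<le> (q / n)\<^sup>2 * (q * q)" .
  have "(\<Sum>x\<in>carrier R. u x * h x)\<^sup>2 \<le> (\<Sum>x\<in>carrier R. (u x)\<^sup>2) * (\<Sum>x\<in>carrier R. (h x)\<^sup>2)"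
    by (rule Cauchy_Schwarz_ineq_sum)
  also have "\<dots> \<le> q * ((q / n)\<^sup>2 * (q * q))"
    using sum_sq_le[of u, OF u] h_sq \<open>q > 0\<close> by (intro mult_mono) (auto intro: sum_nonneg)
  also have "\<dots> = (q\<^sup>2 * (sqrt q / n))\<^sup>2"
    using \<open>q > 0\<close> by (simp add: power_mult_distrib power_divide power4_eq_xxxx) (simp add: power2_eq_square)
  finally have "\<bar>\<Sum>x\<in>carrier R. u x * h x\<bar> \<le> q\<^sup>2 * (sqrt q / n)"
    using \<open>n > 0\<close> \<open>q > 0\<close> by (simp add: abs_le_square_iff[symmetric])
  moreover have "(\<Sum>x\<in>carrier R. \<Sum>y\<in>carrier R. (sigma R A (x \<ominus> y) - 1) * (u x * v y))
      = (\<Sum>x\<in>carrier R. u x * h x)"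
    by (simp add: h_def sum_distrib_left mult_ac)
  ultimately show ?thesis by (simp add: q_def n_def)
qed

definition box_sum :: "'a set \<Rightarrow> ('a \<times> 'a \<Rightarrow> real) \<Rightarrow> ('a \<times> 'a \<Rightarrow> real)
    \<Rightarrow> ('a \<times> 'a \<Rightarrow> real) \<Rightarrow> ('a \<times> 'a \<Rightarrow> real) \<Rightarrow> real" where
  "box_sum F g1 g2 g3 g4 =
     (\<Sum>a\<in>F. \<Sum>b\<in>F. \<Sum>c\<in>F. \<Sum>d\<in>F. g1 (a,c) * g2 (a,d) * g3 (b,c) * g4 (b,d))"

lemma Mform_eq_box_sum:
  "Mform R f1 f2 f3 f4 = box_sum (carrier R) f1 f2 f3 f4 / real (card (carrier R)) ^ 4"
  by (simp add: Mform_def box_sum_def)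

lemma box_sum_rows:
  "box_sum F g1 g2 g3 g4
    = (\<Sum>a\<in>F. \<Sum>b\<in>F. (\<Sum>c\<in>F. g1 (a,c) * g3 (b,c)) * (\<Sum>d\<in>F. g2 (a,d) * g4 (b,d)))"
  unfolding box_sum_def by (simp add: sum_product mult_ac)

lemma box_sum_columns:
  "box_sum F g1 g2 g3 g4
    = (\<Sum>c\<in>F. \<Sum>d\<in>F. (\<Sum>a\<in>F. g1 (a,c) * g2 (a,d)) * (\<Sum>b\<in>F. g3 (b,c) * g4 (b,d)))"
proof -
  have "(\<Sum>c\<in>F. \<Sum>d\<in>F. (\<Sum>a\<in>F. g1 (a,c) * g2 (a,d)) * (\<Sum>b\<in>F. g3 (b,c) * g4 (b,d)))
      = (\<Sum>c\<in>F. \<Sum>d\<in>F. \<Sum>a\<in>F. \<Sum>b\<in>F. g1 (a,c) * g2 (a,d) * g3 (b,c) * g4 (b,d))"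
    by (simp add: sum_product mult_ac)
  also have "\<dots> = box_sum F g1 g2 g3 g4"
    unfolding box_sum_def by (rule sum_double_swap)
  finally show ?thesis by (rule sym)
qed

lemma box_sum_nonneg: "box_sum F g g h h \<ge> 0"
  unfolding box_sum_rows by (auto intro!: sum_nonneg)

lemma box_sum_le_rows: "(box_sum F g1 g2 g3 g4)\<^sup>2 \<le> box_sum F g1 g1 g3 g3 * box_sum F g2 g2 g4 g4"
  unfolding box_sum_rows power2_eq_square[symmetric]
  by (rule Cauchy_Schwarz_ineq_double_sum)

lemma box_sum_le_columns: "(box_sum F g g h h)\<^sup>2 \<le> box_sum F g g g g * box_sum F h h h h"
  unfolding box_sum_columns power2_eq_square[symmetric]
  by (rule Cauchy_Schwarz_ineq_double_sum)

lemma box_sum_gowers_cauchy_schwarz: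
  "(box_sum F g1 g2 g3 g4)^4
    \<le> box_sum F g1 g1 g1 g1 * box_sum F g2 g2 g2 g2 * box_sum F g3 g3 g3 g3 * box_sum F g4 g4 g4 g4"
proof -
  have "(box_sum F g1 g2 g3 g4)^4 = ((box_sum F g1 g2 g3 g4)\<^sup>2)\<^sup>2" by simp
  also have "\<dots> \<le> (box_sum F g1 g1 g3 g3)\<^sup>2 * (box_sum F g2 g2 g4 g4)\<^sup>2"
    unfolding power_mult_distrib[symmetric] by (rule power_mono[OF box_sum_le_rows]) simp
  also have "\<dots> \<le> (box_sum F g1 g1 g1 g1 * box_sum F g3 g3 g3 g3)
      * (box_sum F g2 g2 g2 g2 * box_sum F g4 g4 g4 g4)"
    by (intro mult_mono box_sum_le_columns) (auto intro: mult_nonneg_nonneg box_sum_nonneg)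
  finally show ?thesis by (simp add: mult_ac)
qed

lemma abs_box_sum_le:
  assumes "\<And>x y. x \<in> F \<Longrightarrow> y \<in> F \<Longrightarrow> \<bar>g (x,y)\<bar> \<le> 1"
  shows "\<bar>box_sum F g g g g\<bar> \<le> real (card F)^4"
proof -
  have "\<bar>g (a,c) * g (a,d) * g (b,c) * g (b,d)\<bar> \<le> 1" if "a \<in> F" "b \<in> F" "c \<in> F" "d \<in> F" for a b c d
    unfolding abs_mult by (intro mult_le_one) (simp_all add: assms that)
  then have "\<bar>\<Sum>c\<in>F. \<Sum>d\<in>F. g (a,c) * g (a,d) * g (b,c) * g (b,d)\<bar> \<le> real (card F)^2 * 1"
    if "a \<in> F" "b \<in> F" for a b
    using that by (intro abs_double_sum_le)
  then have "\<bar>box_sum F g g g g\<bar> \<le> real (card F)^2 * (real (card F)^2 * 1)"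
    unfolding box_sum_def by (rule abs_double_sum_le)
  then show ?thesis by simp
qed

lemma abs_Mform_le_prod_box_norm:
  "\<bar>Mform R f1 f2 f3 f4\<bar> \<le> box_norm R f1 * box_norm R f2 * box_norm R f3 * box_norm R f4"
proof -
  define F where "F = carrier R"
  define M where "M g = box_sum F g g g g / real (card F) ^ 4" for g
  have M_nonneg: "M g \<ge> 0" for g
    by (simp add: M_def box_sum_nonneg)
  have box_norm_eq: "box_norm R g = M g powr (1/4)" for g
    by (simp add: box_norm_def Mform_eq_box_sum M_def F_def)
  have "\<bar>Mform R f1 f2 f3 f4\<bar> ^ 4 = (box_sum F f1 f2 f3 f4)^4 / (real (card F) ^ 4) ^ 4"
    by (simp add: Mform_eq_box_sum F_def power_abs power_divide)
  also have "\<dots> \<le> box_sum F f1 f1 f1 f1 * box_sum F f2 f2 f2 f2 * box_sum F f3 f3 f3 f3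
      * box_sum F f4 f4 f4 f4 / (real (card F) ^ 4) ^ 4"
    by (intro divide_right_mono box_sum_gowers_cauchy_schwarz) simp
  also have "\<dots> = M f1 * M f2 * M f3 * M f4"
    by (simp add: M_def)
  finally have "\<bar>Mform R f1 f2 f3 f4\<bar> \<le> (M f1 * M f2 * M f3 * M f4) powr (1/4)"
    by (intro power4_le_imp_le_powr) simp_all
  also have "\<dots> = box_norm R f1 * box_norm R f2 * box_norm R f3 * box_norm R f4"
    by (simp only: box_norm_eq powr_mult)
  finally show ?thesis .
qed

lemma box_norm_le_one:
  assumes "\<And>x y. x \<in> carrier R \<Longrightarrow> y \<in> carrier R \<Longrightarrow> \<bar>f (x,y)\<bar> \<le> 1"
  shows "box_norm R f \<le> 1"
proof -
  have "\<bar>Mform R f f f f\<bar> \<le> 1"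
    using abs_box_sum_le[of "carrier R" f, OF assms] by (auto simp: Mform_eq_box_sum abs_divide divide_le_eq_1)
  then show ?thesis
    unfolding box_norm_def by (intro powr_le1) simp_all
qed

lemma prod4_le_Min:
  fixes x1 x2 x3 x4 :: real
  assumes "x1 \<in> {0..1}" "x2 \<in> {0..1}" "x3 \<in> {0..1}" "x4 \<in> {0..1}"
  shows "x1 * x2 * x3 * x4 \<le> Min {x1, x2, x3, x4}"
proof -
  have le: "a * b \<le> a" "a * b \<le> b" "a * b \<in> {0..1}" if "a \<in> {0..1}" "b \<in> {0..1}" for a b :: real
    using that by (auto intro: mult_right_le_one_le mult_left_le_one_le mult_le_one)
  show ?thesis
    using le[OF le(3)[OF le(3)[OF assms(1,2)] assms(3)] assms(4)] le[OF le(3)[OF assms(1,2)] assms(3)]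
      le[OF assms(1,2)]
    by (simp add: min.bounded_iff)
qed

lemma abs_Mform_le_Min_box_norm:
  assumes "\<forall>f\<in>{f1,f2,f3,f4}. \<forall>x\<in>carrier R. \<forall>y\<in>carrier R. \<bar>f (x,y)\<bar> \<le> 1"
  shows "\<bar>Mform R f1 f2 f3 f4\<bar> \<le> Min {box_norm R f1, box_norm R f2, box_norm R f3, box_norm R f4}"
proof -
  have "box_norm R f \<in> {0..1}" if "f \<in> {f1,f2,f3,f4}" for f
  proof -
    have "box_norm R f \<le> 1" using assms that by (intro box_norm_le_one) blast
    then show ?thesis unfolding box_norm_def by simp
  qed
  then show ?thesis
    using abs_Mform_le_prod_box_norm[of R f1 f2 f3 f4] prod4_le_Min by (meson insertCI order_trans)
qed

lemma abs_Nform_sub_Mform_le: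
  fixes R :: "nat ring" (structure)
  assumes "domain R" and fin: "finite (carrier R)" and sg: "subgroup A (mult_of R)"
    and bnd: "\<forall>f\<in>{f1,f2,f3,f4}. \<forall>x\<in>carrier R. \<forall>y\<in>carrier R. \<bar>f (x,y)\<bar> \<le> 1"
  shows "\<bar>Nform R A f1 f2 f3 f4 - Mform R f1 f2 f3 f4\<bar>
    \<le> 2 * (sqrt (real (card (carrier R))) / real (card A))"
proof -
  interpret domain R by fact
  define F where "F = carrier R"
  define q where "q = real (card F)"
  define \<eta> where "\<eta> = sqrt q / real (card A)"
  define s where "s = sigma R A"
  have A: "A \<subseteq> F" "A \<noteq> {}"
    using subgroup.subset[OF sg] subgroup.one_closed[OF sg] by (auto simp: F_def)
  have "q > 0"
    using fin zero_closed unfolding q_def F_def by (metis card_gt_0_iff empty_iff of_nat_0_less_iff)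
  have prod_bnd: "\<bar>g (x,y) * h (x',y')\<bar> \<le> 1"
    if "g \<in> {f1,f2,f3,f4}" "h \<in> {f1,f2,f3,f4}" "x \<in> F" "y \<in> F" "x' \<in> F" "y' \<in> F" for g h x y x' y'
    using bnd that unfolding abs_mult F_def by (intro mult_le_one) auto
  have bilinear: "\<bar>\<Sum>x\<in>F. \<Sum>y\<in>F. (s (x \<ominus> y) - 1) * (u x * v y)\<bar> \<le> q\<^sup>2 * \<eta>"
    if "\<And>x. x \<in> F \<Longrightarrow> \<bar>u x\<bar> \<le> 1" "\<And>y. y \<in> F \<Longrightarrow> \<bar>v y\<bar> \<le> 1" for u v
    using sigma_bilinear_bound[OF assms(1) fin sg, of u v] that
    by (simp add: s_def q_def \<eta>_def F_def)
  define Y where "Y a b c d = (s (a \<ominus> b) - 1) * ((f1 (a,c) * f2 (a,d)) * (f3 (b,c) * f4 (b,d)))"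
    for a b c d
  define Z where "Z a b c d = (s (c \<ominus> d) - 1) * ((f1 (a,c) * f3 (b,c)) * (f2 (a,d) * f4 (b,d)))"
    for a b c d
  have "f1 (a,c) * f2 (a,d) * f3 (b,c) * f4 (b,d) * s (a \<ominus> b) * s (c \<ominus> d)
      = f1 (a,c) * f2 (a,d) * f3 (b,c) * f4 (b,d) + (Y a b c d + s (a \<ominus> b) * Z a b c d)" for a b c d
    unfolding Y_def Z_def by (simp add: algebra_simps)
  then have "q^4 * Nform R A f1 f2 f3 f4 = q^4 * Mform R f1 f2 f3 f4
      + (\<Sum>a\<in>F. \<Sum>b\<in>F. \<Sum>c\<in>F. \<Sum>d\<in>F. Y a b c d + s (a \<ominus> b) * Z a b c d)"
    using \<open>q > 0\<close> by (simp add: Nform_def Mform_def s_def q_def F_def sum.distrib)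
  then have N_sub_M: "Nform R A f1 f2 f3 f4 - Mform R f1 f2 f3 f4
      = ((\<Sum>a\<in>F. \<Sum>b\<in>F. \<Sum>c\<in>F. \<Sum>d\<in>F. Y a b c d)
        + (\<Sum>a\<in>F. \<Sum>b\<in>F. s (a \<ominus> b) * (\<Sum>c\<in>F. \<Sum>d\<in>F. Z a b c d))) / q^4"
    using \<open>q > 0\<close> by (simp add: field_simps sum.distrib sum_distrib_left)
  have "\<bar>\<Sum>a\<in>F. \<Sum>b\<in>F. Y a b c d\<bar> \<le> q\<^sup>2 * \<eta>" if "c \<in> F" "d \<in> F" for c d
    using bilinear[of "\<lambda>a. f1 (a,c) * f2 (a,d)" "\<lambda>b. f3 (b,c) * f4 (b,d)"] that
    unfolding Y_def by (simp add: prod_bnd)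
  then have "\<bar>\<Sum>c\<in>F. \<Sum>d\<in>F. \<Sum>a\<in>F. \<Sum>b\<in>F. Y a b c d\<bar> \<le> q\<^sup>2 * (q\<^sup>2 * \<eta>)"
    unfolding q_def by (rule abs_double_sum_le[unfolded q_def])
  then have "\<bar>\<Sum>a\<in>F. \<Sum>b\<in>F. \<Sum>c\<in>F. \<Sum>d\<in>F. Y a b c d\<bar> \<le> q\<^sup>2 * (q\<^sup>2 * \<eta>)"
    by (simp only: sum_double_swap[of Y F F F F])
  moreover have "\<bar>\<Sum>a\<in>F. \<Sum>b\<in>F. s (a \<ominus> b) * (\<Sum>c\<in>F. \<Sum>d\<in>F. Z a b c d)\<bar> \<le> q\<^sup>2 * (q\<^sup>2 * \<eta>)"
  proof -
    have Z_bnd: "\<bar>\<Sum>c\<in>F. \<Sum>d\<in>F. Z a b c d\<bar> \<le> q\<^sup>2 * \<eta>" if "a \<in> F" "b \<in> F" for a b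
      using bilinear[of "\<lambda>c. f1 (a,c) * f3 (b,c)" "\<lambda>d. f2 (a,d) * f4 (b,d)"] that
      unfolding Z_def by (simp add: prod_bnd)
    have "\<bar>\<Sum>a\<in>F. \<Sum>b\<in>F. s (a \<ominus> b) * (\<Sum>c\<in>F. \<Sum>d\<in>F. Z a b c d)\<bar>
        \<le> (\<Sum>a\<in>F. \<Sum>b\<in>F. s (a \<ominus> b) * (q\<^sup>2 * \<eta>))"
      by (intro order_trans[OF sum_abs sum_mono] order_trans[OF sum_abs sum_mono])
        (auto simp: abs_mult s_def sigma_nonneg intro!: mult_left_mono Z_bnd)
    also have "\<dots> = (\<Sum>a\<in>F. q * (q\<^sup>2 * \<eta>))"
      using sum_sigma[OF ring_axioms fin A[unfolded F_def]]
      by (simp add: s_def q_def F_def flip: sum_distrib_right)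
    finally show ?thesis by (simp add: q_def power2_eq_square)
  qed
  ultimately have "\<bar>(\<Sum>a\<in>F. \<Sum>b\<in>F. \<Sum>c\<in>F. \<Sum>d\<in>F. Y a b c d)
      + (\<Sum>a\<in>F. \<Sum>b\<in>F. s (a \<ominus> b) * (\<Sum>c\<in>F. \<Sum>d\<in>F. Z a b c d))\<bar> \<le> q^4 * (2 * \<eta>)"
    by (simp add: power2_eq_square power4_eq_xxxx)
  then show ?thesis
    unfolding N_sub_M using \<open>q > 0\<close>
    by (simp add: abs_divide pos_divide_le_eq mult.commute \<eta>_def q_def F_def)
qed

lemma sqrt_div_le_powr:
  fixes q n :: real
  assumes "0 < q" "sqrt q \<le> n"
  shows "sqrt q / n \<le> q powr (1/8) / n powr (1/4)"
proof -
  have "n > 0" using assms by (meson less_le_trans real_sqrt_gt_zero)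
  have "q powr (3/8) = sqrt q powr (3/4)"
    using assms(1) by (simp add: powr_half_sqrt[symmetric] powr_powr)
  also have "\<dots> \<le> n powr (3/4)"
    using assms by (intro powr_mono2) auto
  finally have "q powr (3/8) / n powr (3/4) \<le> 1"
    using \<open>n > 0\<close> by simp
  have "sqrt q / n = q powr (1/8) / n powr (1/4) * (q powr (3/8) / n powr (3/4))"
    using assms(1) \<open>n > 0\<close> by (simp add: powr_half_sqrt[symmetric] flip: powr_add)
  also have "\<dots> \<le> q powr (1/8) / n powr (1/4)"
    by (rule mult_right_le_one_le) (use \<open>q powr (3/8) / n powr (3/4) \<le> 1\<close> in auto)
  finally show ?thesis .
qed

theorem lemma3p4:
  shows "\<exists>C::real. C > 0 \<and>
    (\<forall>(R :: nat ring) (A :: nat set) f1 f2 f3 f4.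
       field R \<longrightarrow> finite (carrier R) \<longrightarrow> card (carrier R) mod 4 = 3 \<longrightarrow>
       subgroup A (mult_of R) \<longrightarrow>
       real (card A) \<ge> real (card (carrier R)) powr (2/3) \<longrightarrow>
       (\<forall>f\<in>{f1,f2,f3,f4}. \<forall>x\<in>carrier R. \<forall>y\<in>carrier R. \<bar>f (x,y)\<bar> \<le> 1) \<longrightarrow>
       \<bar>Nform R A f1 f2 f3 f4\<bar> \<le>
         Min {box_norm R f1, box_norm R f2, box_norm R f3, box_norm R f4}
         + C * real (card (carrier R)) powr (1/8) / real (card A) powr (1/4))"
proof (intro exI[of _ 2] conjI allI impI)
  fix R :: "nat ring" and A :: "nat set" and f1 f2 f3 f4 :: "nat \<times> nat \<Rightarrow> real"
  assume "field R" and fin: "finite (carrier R)" and "card (carrier R) mod 4 = 3"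
    and sg: "subgroup A (mult_of R)"
    and large: "real (card A) \<ge> real (card (carrier R)) powr (2/3)"
    and bnd: "\<forall>f\<in>{f1,f2,f3,f4}. \<forall>x\<in>carrier R. \<forall>y\<in>carrier R. \<bar>f (x,y)\<bar> \<le> 1"
  interpret field R by fact
  define q where "q = real (card (carrier R))"
  have "card (carrier R) > 0"
    using fin zero_closed card_gt_0_iff by blast
  then have "q \<ge> 1"
    by (simp add: q_def)
  then have "sqrt q \<le> q powr (2/3)"
    by (simp add: powr_half_sqrt[symmetric] powr_mono)
  then have "sqrt q \<le> real (card A)"
    using large by (simp add: q_def)
  then have "sqrt q / real (card A) \<le> q powr (1/8) / real (card A) powr (1/4)"
    using \<open>q \<ge> 1\<close> by (intro sqrt_div_le_powr) simp_all
  then show "\<bar>Nform R A f1 f2 f3 f4\<bar> \<le> Min {box_norm R f1, box_norm R f2, box_norm R f3, box_norm R f4}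
      + 2 * real (card (carrier R)) powr (1/8) / real (card A) powr (1/4)"
    using abs_Nform_sub_Mform_le[OF domain_axioms fin sg bnd] abs_Mform_le_Min_box_norm[OF bnd]
    unfolding q_def by linarith
qed simp

end
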